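(* Let $(\Omega,\mathcal{F},\mathbb{P})$ be a nonatomic probability space, let $u:\mathbb{R}\to\mathbb{R}\cup\{-\infty\}$ be a utility function bounded from above, let $\alpha\in\mathbb{R}$ be such that $u(x)\ge\alpha$ for some $x\in\mathbb{R}$, and fix $1\le p<\infty$. Assume one of the following conditions: (i) $u(x)\le\alpha$ for all $x\in\mathbb{R}$; (ii) $\lim_{x\to\infty}\frac{x^p}{u(-x)}=0$. Then the set $\mathcal{A}_u^p=\{X\in L^p: \mathbb{E}[u(X)]\ge\alpha\}$ has empty interior in $L^p$.
   Context: A utility function is a nonconstant, increasing, concave function $u:\mathbb{R}\to\mathbb{R}\cup\{-\infty\}$. $L^p=L^p(\Omega,\mathcal{F},\mathbb{P})$ with its norm topology. *)

theory Defs
  imports "HOL-Probability.Probability"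
begin

definition utility :: "(real \<Rightarrow> ereal) \<Rightarrow> bool" where
  "utility u \<longleftrightarrow>
     (\<forall>x. u x \<noteq> \<infinity>) \<and>
     (\<exists>x y. u x \<noteq> u y) \<and>
     mono u \<and>
     (\<forall>x y t. 0 \<le> t \<and> t \<le> 1 \<longrightarrow>
        ereal t * u x + ereal (1 - t) * u y \<le> u (t * x + (1 - t) * y))"

definition nonatomic :: "'a measure \<Rightarrow> bool" where
  "nonatomic M \<longleftrightarrow>
     (\<forall>A\<in>sets M. measure M A > 0 \<longrightarrow>
        (\<exists>B\<in>sets M. B \<subseteq> A \<and> 0 < measure M B \<and> measure M B < measure M A))"

text \<open>Expectation of an extended-real valued random variable:
  E[f] = E[f^+] - E[f^-] (well defined in ereal when E[f^+] < \<infinity>).\<close>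
definition ereal_expectation :: "'a measure \<Rightarrow> ('a \<Rightarrow> ereal) \<Rightarrow> ereal" where
  "ereal_expectation M f =
     enn2ereal (\<integral>\<^sup>+ \<omega>. e2ennreal (f \<omega>) \<partial>M) - enn2ereal (\<integral>\<^sup>+ \<omega>. e2ennreal (- f \<omega>) \<partial>M)"

text \<open>L^p (as functions; the L^p pseudometric).\<close>
definition Lp_space :: "'a measure \<Rightarrow> real \<Rightarrow> ('a \<Rightarrow> real) set" where
  "Lp_space M p = {X. X \<in> borel_measurable M \<and> integrable M (\<lambda>\<omega>. \<bar>X \<omega>\<bar> powr p)}"

definition Lp_dist :: "'a measure \<Rightarrow> real \<Rightarrow> ('a \<Rightarrow> real) \<Rightarrow> ('a \<Rightarrow> real) \<Rightarrow> real" where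
  "Lp_dist M p X Y = (LINT \<omega>|M. \<bar>X \<omega> - Y \<omega>\<bar> powr p) powr (1 / p)"

definition Lp_interior :: "'a measure \<Rightarrow> real \<Rightarrow> ('a \<Rightarrow> real) set \<Rightarrow> ('a \<Rightarrow> real) set" where
  "Lp_interior M p A =
     {X \<in> A \<inter> Lp_space M p. \<exists>\<epsilon>>0. \<forall>Y\<in>Lp_space M p. Lp_dist M p X Y < \<epsilon> \<longrightarrow> Y \<in> A}"

definition acceptance_set :: "'a measure \<Rightarrow> real \<Rightarrow> (real \<Rightarrow> ereal) \<Rightarrow> real \<Rightarrow> ('a \<Rightarrow> real) set" where
  "acceptance_set M p u \<alpha> = {X \<in> Lp_space M p. ereal_expectation M (\<lambda>\<omega>. u (X \<omega>)) \<ge> ereal \<alpha>}"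

end

theory Submission
  imports Defs
begin

text \<open>
  Let \<open>X\<close> be an interior point of the acceptance set, with a ball of radius \<open>\<epsilon>\<close>.
  On an event \<open>B\<close> where \<open>\<bar>X\<bar> \<le> K\<close> replace \<open>X\<close> by a constant loss \<open>c\<close>; this moves
  \<open>X\<close> by at most \<open>(K + \<bar>c\<bar>) P(B)\<^sup>1\<^sup>/\<^sup>p\<close> in \<open>L\<^sup>p\<close>, while the expected utility drops to at
  most \<open>C (1 - P(B)) + u(c) P(B)\<close>, where \<open>C\<close> bounds \<open>u\<close>. Nonatomicity makes \<open>P(B)\<close> as
  small as we like. Under (i) a fixed \<open>c\<close> with \<open>u(c) < \<alpha> = C\<close> suffices; under (ii) take
  \<open>c = -s\<close> with \<open>s\<^sup>p P(B)\<close> fixed and small: then \<open>u(-s) P(B) \<le> -L s\<^sup>p P(B)\<close> for arbitrarily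
  large \<open>L\<close>. Either way the perturbed position is unacceptable.
\<close>

lemma enn2ereal_eq_ereal_enn2real: "x \<noteq> top \<Longrightarrow> enn2ereal x = ereal (enn2real x)"
  by (cases x rule: ennreal_cases) auto

lemma ereal_expectation_ereal:
  assumes "integrable M g"
  shows "ereal_expectation M (\<lambda>\<omega>. ereal (g \<omega>)) = ereal (integral\<^sup>L M g)"
proof -
  have "(\<integral>\<^sup>+ x. ennreal (g x) \<partial>M) \<noteq> \<infinity>" "(\<integral>\<^sup>+ x. ennreal (- g x) \<partial>M) \<noteq> \<infinity>"
    using assms by auto
  then show ?thesis
    unfolding ereal_expectation_def real_lebesgue_integral_def[OF assms]
    by (simp add: enn2ereal_eq_ereal_enn2real)
qed

lemma ereal_expectation_mono:
  assumes "\<And>\<omega>. \<omega> \<in> space M \<Longrightarrow> f \<omega> \<le> g \<omega>"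
  shows "ereal_expectation M f \<le> ereal_expectation M g"
  unfolding ereal_expectation_def
proof (rule ereal_minus_mono)
  show "enn2ereal (\<integral>\<^sup>+ \<omega>. e2ennreal (f \<omega>) \<partial>M) \<le> enn2ereal (\<integral>\<^sup>+ \<omega>. e2ennreal (g \<omega>) \<partial>M)"
    using assms by (simp only: less_eq_ennreal.rep_eq[symmetric], intro nn_integral_mono e2ennreal_mono) auto
  show "enn2ereal (\<integral>\<^sup>+ \<omega>. e2ennreal (- g \<omega>) \<partial>M) \<le> enn2ereal (\<integral>\<^sup>+ \<omega>. e2ennreal (- f \<omega>) \<partial>M)"
    using assms by (simp only: less_eq_ennreal.rep_eq[symmetric], intro nn_integral_mono e2ennreal_mono) auto
qed

lemma (in prob_space) ereal_expectation_le_split: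
  assumes B: "B \<in> events"
    and outside: "\<And>\<omega>. \<omega> \<in> space M - B \<Longrightarrow> f \<omega> \<le> ereal a"
    and inside: "\<And>\<omega>. \<omega> \<in> B \<Longrightarrow> f \<omega> \<le> ereal b"
  shows "ereal_expectation M f \<le> ereal (a * (1 - prob B) + b * prob B)"
proof -
  have int: "integrable M (\<lambda>\<omega>. (b - a) * indicator B \<omega>)"
    using B by (intro integrable_mult_right integrable_real_indicator) (auto simp: emeasure_eq_measure)
  have "ereal_expectation M f \<le> ereal_expectation M (\<lambda>\<omega>. ereal (a + (b - a) * indicator B \<omega>))"
    using outside inside sets.sets_into_space[OF B] by (intro ereal_expectation_mono) (auto split: split_indicator)
  also have "\<dots> = ereal (expectation (\<lambda>\<omega>. a + (b - a) * indicator B \<omega>))"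
    using int by (intro ereal_expectation_ereal) auto
  also have "expectation (\<lambda>\<omega>. a + (b - a) * indicator B \<omega>) = a + (b - a) * prob B"
    using int B by (subst Bochner_Integration.integral_add) (auto simp: prob_space)
  finally show ?thesis by (simp add: algebra_simps)
qed

lemma (in finite_measure) nonatomic_small_subset:
  assumes "nonatomic M" "A \<in> sets M" "0 < measure M A" "0 < d"
  shows "\<exists>B\<in>sets M. B \<subseteq> A \<and> 0 < measure M B \<and> measure M B \<le> d"
proof -
  have halving: "\<exists>B\<in>sets M. B \<subseteq> A \<and> 0 < measure M B \<and> measure M B \<le> measure M A / 2 ^ n" for n
  proof (induction n)
    case 0
    then show ?case using assms by auto
  next
    case (Suc n)
    then obtain B where B: "B \<in> sets M" "B \<subseteq> A" "0 < measure M B" "measure M B \<le> measure M A / 2 ^ n"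
      by auto
    then obtain B' where B': "B' \<in> sets M" "B' \<subseteq> B" "0 < measure M B'" "measure M B' < measure M B"
      using assms(1) unfolding nonatomic_def by blast
    \<comment> \<open>the smaller of the two pieces \<open>B'\<close> and \<open>B - B'\<close> has at most half the measure of \<open>B\<close>\<close>
    have "measure M (B - B') = measure M B - measure M B'"
      using B B' by (simp add: finite_measure_Diff)
    then show ?case
    proof (cases "measure M B' \<le> measure M B / 2")
      case True
      then show ?thesis using B B' by (intro bexI[of _ B']) auto
    next
      case False
      then show ?thesis using B B' \<open>measure M (B - B') = _\<close> by (intro bexI[of _ "B - B'"]) auto
    qed
  qed
  obtain n where "measure M A / d < 2 ^ n"
    using real_arch_pow[of 2 "measure M A / d"] by auto
  then have "measure M A / 2 ^ n \<le> d"
    using \<open>0 < d\<close> by (simp add: field_simps)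
  then show ?thesis
    using halving[of n] by (meson order.trans)
qed

lemma (in prob_space) exists_pos_prob_abs_le:
  fixes X :: "'a \<Rightarrow> real"
  assumes "X \<in> borel_measurable M"
  shows "\<exists>K\<ge>0. 0 < prob {\<omega>\<in>space M. \<bar>X \<omega>\<bar> \<le> K}"
proof -
  have "(\<lambda>n. prob {\<omega>\<in>space M. \<bar>X \<omega>\<bar> \<le> real n}) \<longlonglongrightarrow> prob (\<Union>n. {\<omega>\<in>space M. \<bar>X \<omega>\<bar> \<le> real n})"
    using assms by (intro finite_Lim_measure_incseq) (auto simp: incseq_def)
  moreover have "(\<Union>n. {\<omega>\<in>space M. \<bar>X \<omega>\<bar> \<le> real n}) = space M"
    by (auto intro: real_nat_ceiling_ge)
  ultimately have "eventually (\<lambda>n. 0 < prob {\<omega>\<in>space M. \<bar>X \<omega>\<bar> \<le> real n}) sequentially"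
    by (intro order_tendstoD(1)) (auto simp: prob_space)
  then obtain n where "0 < prob {\<omega>\<in>space M. \<bar>X \<omega>\<bar> \<le> real n}"
    by (auto simp: eventually_sequentially)
  then show ?thesis by (intro exI[of _ "real n"]) auto
qed

lemma (in finite_measure) Lp_space_replace_on:
  assumes X: "X \<in> Lp_space M p" and B: "B \<in> sets M"
  shows "(\<lambda>\<omega>. if \<omega> \<in> B then c else X \<omega>) \<in> Lp_space M p"
proof -
  have Y: "(\<lambda>\<omega>. if \<omega> \<in> B then c else X \<omega>) \<in> borel_measurable M"
    using X B by (intro measurable_If_set) (auto simp: Lp_space_def)
  have "integrable M (\<lambda>\<omega>. \<bar>if \<omega> \<in> B then c else X \<omega>\<bar> powr p)"
  proof (rule Bochner_Integration.integrable_bound)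
    show "integrable M (\<lambda>\<omega>. \<bar>X \<omega>\<bar> powr p + \<bar>c\<bar> powr p)"
      using X by (auto simp: Lp_space_def)
    show "AE \<omega> in M. norm (\<bar>if \<omega> \<in> B then c else X \<omega>\<bar> powr p) \<le> norm (\<bar>X \<omega>\<bar> powr p + \<bar>c\<bar> powr p)"
      by auto
  qed (use Y in measurable)
  then show ?thesis
    using Y by (simp add: Lp_space_def)
qed

lemma (in finite_measure) Lp_dist_replace_on_less:
  assumes X: "X \<in> borel_measurable M" and B: "B \<in> sets M" and K: "\<And>\<omega>. \<omega> \<in> B \<Longrightarrow> \<bar>X \<omega>\<bar> \<le> K"
    and p: "0 < p" and \<epsilon>: "0 < \<epsilon>" and small: "(K + \<bar>c\<bar>) powr p * measure M B < \<epsilon> powr p"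
  shows "Lp_dist M p X (\<lambda>\<omega>. if \<omega> \<in> B then c else X \<omega>) < \<epsilon>"
proof -
  define D where "D = (\<lambda>\<omega>. \<bar>X \<omega> - (if \<omega> \<in> B then c else X \<omega>)\<bar> powr p)"
  have bound: "D \<omega> \<le> (K + \<bar>c\<bar>) powr p * indicator B \<omega>" for \<omega>
    using K[of \<omega>] p by (auto simp: D_def intro!: powr_mono2 split: split_indicator)
  have ind: "integrable M (\<lambda>\<omega>. (K + \<bar>c\<bar>) powr p * indicator B \<omega>)"
    using B by (intro integrable_mult_right integrable_real_indicator) (auto simp: emeasure_eq_measure)
  have "D \<in> borel_measurable M"
    unfolding D_def using X B by measurable
  then have D: "integrable M D"
    by (rule Bochner_Integration.integrable_bound[OF ind]) (use bound in \<open>auto simp: D_def\<close>)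
  have "integral\<^sup>L M D \<le> (K + \<bar>c\<bar>) powr p * measure M B"
    using integral_mono[OF D ind bound] B by simp
  then have "integral\<^sup>L M D powr (1 / p) < (\<epsilon> powr p) powr (1 / p)"
    using small p by (intro powr_less_mono2) (auto simp: D_def)
  then show ?thesis
    using p \<epsilon> by (simp add: Lp_dist_def D_def powr_powr)
qed

text \<open>
  Setting a position with \<open>\<bar>X\<bar> \<le> K\<close> to \<open>c\<close> on an event of probability \<open>\<mu>\<close> costs at most
  \<open>(K + \<bar>c\<bar>)\<^sup>p \<mu>\<close> in the \<open>p\<close>-th power of the \<open>L\<^sup>p\<close> distance, and leaves expected utility at most
  \<open>C (1 - \<mu>) + g \<mu>\<close> when \<open>C\<close> bounds \<open>u\<close> and \<open>g\<close> bounds \<open>u c\<close>.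
\<close>
definition admits_cheap_shortfall :: "real \<Rightarrow> (real \<Rightarrow> ereal) \<Rightarrow> real \<Rightarrow> real \<Rightarrow> bool" where
  "admits_cheap_shortfall p u C \<alpha> \<longleftrightarrow>
     (\<forall>K\<ge>0. \<forall>\<epsilon>>0. \<exists>\<delta>>0. \<forall>\<mu>. 0 < \<mu> \<and> \<mu> \<le> \<delta> \<longrightarrow>
        (\<exists>c g. u c \<le> ereal g \<and> (K + \<bar>c\<bar>) powr p * \<mu> < \<epsilon> powr p \<and> C * (1 - \<mu>) + g * \<mu> < \<alpha>))"

lemma (in prob_space) Lp_interior_acceptance_set_empty:
  assumes nonatomic: "nonatomic M" and p: "0 < p" and C: "\<And>x. u x \<le> ereal C"
    and cheap: "admits_cheap_shortfall p u C \<alpha>"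
  shows "Lp_interior M p (acceptance_set M p u \<alpha>) = {}"
proof (rule ccontr)
  assume "Lp_interior M p (acceptance_set M p u \<alpha>) \<noteq> {}"
  then obtain X \<epsilon> where X: "X \<in> Lp_space M p" and \<epsilon>: "0 < \<epsilon>"
    and ball: "\<And>Y. Y \<in> Lp_space M p \<Longrightarrow> Lp_dist M p X Y < \<epsilon> \<Longrightarrow> Y \<in> acceptance_set M p u \<alpha>"
    unfolding Lp_interior_def by blast
  have Xm: "X \<in> borel_measurable M"
    using X by (simp add: Lp_space_def)
  obtain K where K: "0 \<le> K" "0 < prob {\<omega>\<in>space M. \<bar>X \<omega>\<bar> \<le> K}"
    using exists_pos_prob_abs_le[OF Xm] by blast
  obtain \<delta> where \<delta>: "0 < \<delta>" and shortfall: "\<forall>\<mu>. 0 < \<mu> \<and> \<mu> \<le> \<delta> \<longrightarrow>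
      (\<exists>c g. u c \<le> ereal g \<and> (K + \<bar>c\<bar>) powr p * \<mu> < \<epsilon> powr p \<and> C * (1 - \<mu>) + g * \<mu> < \<alpha>)"
    using cheap K(1) \<epsilon> unfolding admits_cheap_shortfall_def by blast
  have "{\<omega>\<in>space M. \<bar>X \<omega>\<bar> \<le> K} \<in> events"
    using Xm by measurable
  then obtain B where B: "B \<in> events" "B \<subseteq> {\<omega>\<in>space M. \<bar>X \<omega>\<bar> \<le> K}" "0 < prob B" "prob B \<le> \<delta>"
    using nonatomic_small_subset[OF nonatomic _ K(2) \<delta>] by blast
  obtain c g where g: "u c \<le> ereal g" and small: "(K + \<bar>c\<bar>) powr p * prob B < \<epsilon> powr p"
    and low: "C * (1 - prob B) + g * prob B < \<alpha>"
    using shortfall B(3,4) by blast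
  define Y where "Y = (\<lambda>\<omega>. if \<omega> \<in> B then c else X \<omega>)"
  have "Y \<in> Lp_space M p"
    unfolding Y_def using X B(1) by (rule Lp_space_replace_on)
  moreover have "Lp_dist M p X Y < \<epsilon>"
    unfolding Y_def using B(2) by (intro Lp_dist_replace_on_less[OF Xm B(1) _ p \<epsilon> small]) blast
  ultimately have "Y \<in> acceptance_set M p u \<alpha>"
    by (rule ball)
  then have "ereal \<alpha> \<le> ereal_expectation M (\<lambda>\<omega>. u (Y \<omega>))"
    by (simp add: acceptance_set_def)
  also have "\<dots> \<le> ereal (C * (1 - prob B) + g * prob B)"
    using B(1) C g by (intro ereal_expectation_le_split) (auto simp: Y_def)
  finally show False
    using low by simp
qed

lemma admits_cheap_shortfall_if_below:
  assumes "u y < ereal \<alpha>"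
  shows "admits_cheap_shortfall p u \<alpha> \<alpha>"
  unfolding admits_cheap_shortfall_def
proof (intro allI impI)
  fix K \<epsilon> :: real
  assume "0 \<le> K" "0 < \<epsilon>"
  obtain \<beta> where \<beta>: "u y \<le> ereal \<beta>" "\<beta> < \<alpha>"
  proof (cases "u y")
    case (real r)
    then show ?thesis using assms that[of r] by simp
  next
    case MInf
    then show ?thesis using that[of "\<alpha> - 1"] by simp
  qed (use assms in simp)
  define a where "a = (K + \<bar>y\<bar>) powr p"
  define \<delta> where "\<delta> = \<epsilon> powr p / (a + 1)"
  have a: "0 \<le> a"
    by (simp add: a_def)
  have \<delta>: "0 < \<delta>"
    using a \<open>0 < \<epsilon>\<close> by (simp add: \<delta>_def)
  moreover have "a * \<mu> < \<epsilon> powr p \<and> \<alpha> * (1 - \<mu>) + \<beta> * \<mu> < \<alpha>" if "0 < \<mu>" "\<mu> \<le> \<delta>" for \<mu>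
  proof
    have "a * \<mu> \<le> a * \<delta>"
      using that a by (simp add: mult_left_mono)
    also have "\<dots> < (a + 1) * \<delta>"
      using \<delta> by simp
    finally show "a * \<mu> < \<epsilon> powr p"
      using a by (simp add: \<delta>_def)
    show "\<alpha> * (1 - \<mu>) + \<beta> * \<mu> < \<alpha>"
      using that \<beta>(2) by (simp add: algebra_simps)
  qed
  ultimately show "\<exists>\<delta>>0. \<forall>\<mu>. 0 < \<mu> \<and> \<mu> \<le> \<delta> \<longrightarrow> (\<exists>c g. u c \<le> ereal g \<and>
      (K + \<bar>c\<bar>) powr p * \<mu> < \<epsilon> powr p \<and> \<alpha> * (1 - \<mu>) + g * \<mu> < \<alpha>)"
    using \<beta>(1) unfolding a_def by (intro exI[of _ \<delta>] conjI allI impI exI[of _ y] exI[of _ \<beta>]) auto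
qed

lemma eventually_le_neg_powr_at_top:
  assumes lim: "((\<lambda>x. ereal (x powr p) / u (- x)) \<longlongrightarrow> 0) at_top"
    and C: "\<And>x. u x \<le> ereal C" and L: "0 < L" and p: "0 < p"
  shows "eventually (\<lambda>x. u (- x) \<le> ereal (- L * x powr p)) at_top"
proof -
  define C' where "C' = max C 1"
  have "eventually (\<lambda>x. ereal (x powr p) / u (- x) < ereal (1 / L)) at_top"
    using lim L by (intro order_tendstoD) auto
  moreover have "eventually (\<lambda>x. ereal (- (1 / L)) < ereal (x powr p) / u (- x)) at_top"
    using lim L by (intro order_tendstoD) auto
  moreover have "eventually (\<lambda>x. max 1 ((C' / L) powr (1 / p)) \<le> x) at_top"
    by (rule eventually_ge_at_top)
  ultimately show ?thesis
  proof eventually_elim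
    case (elim x)
    then have "0 < x" "(C' / L) powr (1 / p) \<le> x"
      by auto
    then have "((C' / L) powr (1 / p)) powr p \<le> x powr p"
      using p by (intro powr_mono2) auto
    then have large: "C' / L \<le> x powr p"
      using p L by (simp add: powr_powr C'_def)
    show ?case
    proof (cases "u (- x)")
      case (real r)
      consider "r < 0" | "r = 0" | "0 < r"
        by linarith
      then show ?thesis
      proof cases
        case 1
        then have "x powr p < r * (- (1 / L))"
          using elim real by (simp add: field_simps)
        then show ?thesis
          using real L by (simp add: field_simps)
      next
        case 2
        then show ?thesis
          using elim real \<open>0 < x\<close> by simp
      next
        case 3
        have "r \<le> C'"
          using C[of "- x"] real by (simp add: C'_def)
        then have "1 / L \<le> x powr p / r"
          using large L 3 by (simp add: field_simps)
        then show ?thesis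
          using elim real 3 by simp
      qed
    qed (use C[of "- x"] in auto)
  qed
qed

lemma admits_cheap_shortfall_if_tendsto:
  assumes lim: "((\<lambda>x. ereal (x powr p) / u (- x)) \<longlongrightarrow> 0) at_top"
    and C: "\<And>x. u x \<le> ereal C" and p: "0 < p"
  shows "admits_cheap_shortfall p u C \<alpha>"
  unfolding admits_cheap_shortfall_def
proof (intro allI impI)
  fix K \<epsilon> :: real
  assume K: "0 \<le> K" and \<epsilon>: "0 < \<epsilon>"
  define \<eta> where "\<eta> = \<epsilon> powr p / 2 powr (p + 1)"
  define L where "L = (\<bar>C\<bar> + \<bar>C - \<alpha>\<bar> + 1) / \<eta>"
  have \<eta>: "0 < \<eta>" and L: "0 < L"
    using \<epsilon> by (simp_all add: \<eta>_def L_def)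
  obtain x0 where x0: "\<And>x. x0 \<le> x \<Longrightarrow> u (- x) \<le> ereal (- L * x powr p)"
    using eventually_le_neg_powr_at_top[OF lim C L p] by (auto simp: eventually_at_top_linorder)
  define m where "m = max (max K x0) 1"
  define \<delta> where "\<delta> = min 1 (\<eta> / m powr p)"
  have m: "K \<le> m" "x0 \<le> m" "1 \<le> m"
    by (auto simp: m_def)
  have "0 < \<delta>"
    using \<eta> m by (simp add: \<delta>_def)
  moreover have "\<exists>c g. u c \<le> ereal g \<and> (K + \<bar>c\<bar>) powr p * \<mu> < \<epsilon> powr p \<and> C * (1 - \<mu>) + g * \<mu> < \<alpha>"
    if \<mu>: "0 < \<mu>" "\<mu> \<le> \<delta>" for \<mu>
  proof (intro exI conjI)
    \<comment> \<open>the loss level \<open>-s\<close> is chosen so that \<open>s\<^sup>p \<mu>\<close> stays fixed at \<open>\<eta>\<close>\<close>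
    define s where "s = (\<eta> / \<mu>) powr (1 / p)"
    have sp: "s powr p = \<eta> / \<mu>"
      using p \<eta> \<mu> by (simp add: s_def powr_powr)
    have "m powr p \<le> \<eta> / \<mu>"
      using \<mu> m \<eta> by (simp add: \<delta>_def field_simps)
    then have "(m powr p) powr (1 / p) \<le> s"
      unfolding s_def using p m by (intro powr_mono2) auto
    then have ms: "m \<le> s"
      using p m by (simp add: powr_powr)
    show "u (- s) \<le> ereal (- L * s powr p)"
      using x0 m ms by simp
    have "(K + \<bar>- s\<bar>) powr p * \<mu> \<le> (2 * s) powr p * \<mu>"
      using m ms K \<mu> p by (intro mult_right_mono powr_mono2) auto
    also have "\<dots> = 2 powr p * \<eta>"
      using sp \<mu> m ms by (simp add: powr_mult)
    also have "\<dots> < \<epsilon> powr p"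
      using \<epsilon> by (simp add: \<eta>_def powr_add)
    finally show "(K + \<bar>- s\<bar>) powr p * \<mu> < \<epsilon> powr p" .
    have "- C * \<mu> \<le> \<bar>C\<bar> * \<mu>"
      using \<mu> by (intro mult_right_mono) auto
    also have "\<dots> \<le> \<bar>C\<bar>"
      using \<mu> by (intro mult_left_le) (auto simp: \<delta>_def)
    finally have "- C * \<mu> \<le> \<bar>C\<bar>" .
    moreover have "- L * s powr p * \<mu> = - (\<bar>C\<bar> + \<bar>C - \<alpha>\<bar> + 1)"
      using sp \<mu> \<eta> by (simp add: L_def)
    ultimately show "C * (1 - \<mu>) + - L * s powr p * \<mu> < \<alpha>"
      by (simp add: algebra_simps)
  qed
  ultimately show "\<exists>\<delta>>0. \<forall>\<mu>. 0 < \<mu> \<and> \<mu> \<le> \<delta> \<longrightarrow> (\<exists>c g. u c \<le> ereal g \<and>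
      (K + \<bar>c\<bar>) powr p * \<mu> < \<epsilon> powr p \<and> C * (1 - \<mu>) + g * \<mu> < \<alpha>)"
    by (intro exI[of _ \<delta>]) simp
qed

theorem lemma6p3:
  fixes M :: "'a measure" and u :: "real \<Rightarrow> ereal" and \<alpha> p :: real
  assumes "prob_space M" and "nonatomic M"
    and "utility u" and "\<exists>C::real. \<forall>x. u x \<le> ereal C"
    and "\<exists>x. u x \<ge> ereal \<alpha>"
    and "1 \<le> p"
    and "(\<forall>x. u x \<le> ereal \<alpha>) \<or>
         ((\<lambda>x. ereal (x powr p) / u (- x)) \<longlongrightarrow> 0) at_top"
  shows "Lp_interior M p (acceptance_set M p u \<alpha>) = {}"
proof -
  interpret prob_space M by fact
  have p: "0 < p"
    using \<open>1 \<le> p\<close> by simp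
  obtain C where C: "\<And>x. u x \<le> ereal C"
    using assms(4) by blast
  from assms(7) show ?thesis
  proof
    assume below: "\<forall>x. u x \<le> ereal \<alpha>"
    then obtain y where "u y < ereal \<alpha>"
      using assms(3) unfolding utility_def by (metis antisym not_le)
    then show ?thesis
      using below Lp_interior_acceptance_set_empty[OF assms(2) p _ admits_cheap_shortfall_if_below] by blast
  next
    assume "((\<lambda>x. ereal (x powr p) / u (- x)) \<longlongrightarrow> 0) at_top"
    then show ?thesis
      by (intro Lp_interior_acceptance_set_empty[OF assms(2) p C] admits_cheap_shortfall_if_tendsto C p)
  qed
qed

end
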